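(* Let $0<\alpha<\pi/4$, $\beta=\pi/4$, and let $F,G_1,G_2$, $X_{\pm\pm}$, $s_{\max}$, $v$ be as in the context. Define $\bar M(s,\alpha)=e^{v(s)X_{++}}e^{v(s)X_{-+}}e^{v(s)X_{--}}e^{v(s)X_{+-}}$ and $\theta(\alpha)=\arcsin\left(\frac{-2\sqrt2\sin\alpha\cos\alpha}{1+\cos^2\alpha}\right)$. Then $$\bar M(0,\alpha)=\bar M(s_{\max},\alpha)=\begin{pmatrix}1&0&0\\0&\cos4\theta(\alpha)&\sin4\theta(\alpha)\\0&-\sin4\theta(\alpha)&\cos4\theta(\alpha)\end{pmatrix}.$$
   Context: $F=\cos\alpha\begin{pmatrix}0&-1&0\\1&0&0\\0&0&0\end{pmatrix}$, $G_1=\sin\alpha\sin\beta\begin{pmatrix}0&0&0\\0&0&-1\\0&1&0\end{pmatrix}$, $G_2=\sin\alpha\cos\beta\begin{pmatrix}0&0&-1\\0&0&0\\1&0&0\end{pmatrix}$, and $X_{ab}=F+aG_1+bG_2$ for $a,b\in\{+1,-1\}$. $s_{\max}=\arccos\left(-\frac{\sin^2\alpha}{1+\cos^2\alpha}\right)$. For $s\in[0,s_{\max}]$, $v(s)=\arccos\left[\frac{d-A(s)-B(s)-C(s)}{e-A(s)+B(s)}\right]$ with $A(s)=8\cos\alpha\sin^2\alpha\sin s$, $B(s)=2\sin^2(2\alpha)\cos s$, $C(s)=4\sin^4\alpha\cos(2s)$, $d=\sin^2(2\alpha)$, $e=5+2\cos2\alpha+\cos4\alpha$; this is the duration of interior bang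 arcs of normal extremals of $\dot x=(F+u_1G_1+u_2G_2)x$ on $S^2$ starting from $(0,0,1)$ whose first bang arc has duration $s$. *)

theory Defs
  imports "HOL-Analysis.Analysis"
begin

fun matpow :: "real^'n^'n \<Rightarrow> nat \<Rightarrow> real^'n^'n" where
  "matpow A 0 = mat 1"
| "matpow A (Suc n) = A ** matpow A n"

definition mexp :: "real^'n^'n \<Rightarrow> real^'n^'n" where
  "mexp A = (\<Sum>n. (1 / fact n) *\<^sub>R matpow A n)"

definition Fm :: "real \<Rightarrow> real^3^3" where
  "Fm \<alpha> = cos \<alpha> *\<^sub>R vector [vector [0, -1, 0], vector [1, 0, 0], vector [0, 0, 0]]"

definition G1m :: "real \<Rightarrow> real \<Rightarrow> real^3^3" where
  "G1m \<alpha> \<beta> = (sin \<alpha> * sin \<beta>) *\<^sub>R vector [vector [0, 0, 0], vector [0, 0, -1], vector [0, 1, 0]]"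

definition G2m :: "real \<Rightarrow> real \<Rightarrow> real^3^3" where
  "G2m \<alpha> \<beta> = (sin \<alpha> * cos \<beta>) *\<^sub>R vector [vector [0, 0, -1], vector [0, 0, 0], vector [1, 0, 0]]"

definition Xm :: "real \<Rightarrow> real \<Rightarrow> real \<Rightarrow> real \<Rightarrow> real^3^3" where
  "Xm a b \<alpha> \<beta> = Fm \<alpha> + a *\<^sub>R G1m \<alpha> \<beta> + b *\<^sub>R G2m \<alpha> \<beta>"

definition smax :: "real \<Rightarrow> real" where
  "smax \<alpha> = arccos (- (sin \<alpha>)\<^sup>2 / (1 + (cos \<alpha>)\<^sup>2))"

definition vdur :: "real \<Rightarrow> real \<Rightarrow> real" where
  "vdur \<alpha> s =
     (let A = 8 * cos \<alpha> * (sin \<alpha>)\<^sup>2 * sin s;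
          B = 2 * (sin (2 * \<alpha>))\<^sup>2 * cos s;
          C = 4 * (sin \<alpha>) ^ 4 * cos (2 * s);
          d = (sin (2 * \<alpha>))\<^sup>2;
          e = 5 + 2 * cos (2 * \<alpha>) + cos (4 * \<alpha>)
      in arccos ((d - A - B - C) / (e - A + B)))"

definition Mbar :: "real \<Rightarrow> real \<Rightarrow> real^3^3" where
  "Mbar s \<alpha> = (let v = vdur \<alpha> s; \<beta> = pi / 4 in
      mexp (v *\<^sub>R Xm 1 1 \<alpha> \<beta>) ** mexp (v *\<^sub>R Xm (-1) 1 \<alpha> \<beta>)
      ** mexp (v *\<^sub>R Xm (-1) (-1) \<alpha> \<beta>) ** mexp (v *\<^sub>R Xm 1 (-1) \<alpha> \<beta>))"

definition theta :: "real \<Rightarrow> real" where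
  "theta \<alpha> = arcsin (- 2 * sqrt 2 * sin \<alpha> * cos \<alpha> / (1 + (cos \<alpha>)\<^sup>2))"

definition Rx :: "real \<Rightarrow> real^3^3" where
  "Rx t = vector [vector [1, 0, 0], vector [0, cos t, sin t], vector [0, - sin t, cos t]]"

end

theory Submission
  imports Defs
begin

text \<open>
  For \<open>\<beta> = \<pi>/4\<close> every \<open>X\<^sub>a\<^sub>b\<close> is the infinitesimal rotation about a unit axis, so Rodrigues'
  formula gives \<open>e\<^sup>v\<^sup>X = I + sin v X + (1 - cos v) X\<^sup>2\<close>. At \<open>s = 0\<close> and at \<open>s = s\<^sub>m\<^sub>a\<^sub>x\<close> the
  duration \<open>v(s)\<close> equals \<open>s\<^sub>m\<^sub>a\<^sub>x\<close>, whose sine and cosine are rational in \<open>cos \<alpha>\<close> and \<open>sin \<alpha>\<close>.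
  The product of the four exponentials then becomes a polynomial identity in \<open>cos \<alpha>\<close> and
  \<open>sin \<alpha>\<close>, which matches the quadruple angle formulas for \<open>\<theta>(\<alpha>)\<close>, where
  \<open>sin \<theta> = -2\<surd>2 sin \<alpha> cos \<alpha> / (1 + cos\<^sup>2 \<alpha>)\<close> and \<open>cos \<theta> = (3 cos\<^sup>2 \<alpha> - 1) / (1 + cos\<^sup>2 \<alpha>)\<close>.
\<close>

definition mat3 :: "real \<Rightarrow> real \<Rightarrow> real \<Rightarrow> real \<Rightarrow> real \<Rightarrow> real \<Rightarrow> real \<Rightarrow> real \<Rightarrow> real \<Rightarrow> real^3^3"
  where "mat3 a b c d e f g h i = vector [vector [a, b, c], vector [d, e, f], vector [g, h, i]]"

lemma mat3_mult:
  "mat3 a1 b1 c1 d1 e1 f1 g1 h1 i1 ** mat3 a2 b2 c2 d2 e2 f2 g2 h2 i2 =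
   mat3 (a1*a2 + b1*d2 + c1*g2) (a1*b2 + b1*e2 + c1*h2) (a1*c2 + b1*f2 + c1*i2)
        (d1*a2 + e1*d2 + f1*g2) (d1*b2 + e1*e2 + f1*h2) (d1*c2 + e1*f2 + f1*i2)
        (g1*a2 + h1*d2 + i1*g2) (g1*b2 + h1*e2 + i1*h2) (g1*c2 + h1*f2 + i1*i2)"
  by (simp add: mat3_def matrix_matrix_mult_def vec_eq_iff forall_3 sum_3)

lemma mat3_add:
  "mat3 a1 b1 c1 d1 e1 f1 g1 h1 i1 + mat3 a2 b2 c2 d2 e2 f2 g2 h2 i2 =
   mat3 (a1+a2) (b1+b2) (c1+c2) (d1+d2) (e1+e2) (f1+f2) (g1+g2) (h1+h2) (i1+i2)"
  by (simp add: mat3_def vec_eq_iff forall_3)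

lemma mat3_scaleR:
  "r *\<^sub>R mat3 a b c d e f g h i = mat3 (r*a) (r*b) (r*c) (r*d) (r*e) (r*f) (r*g) (r*h) (r*i)"
  by (simp add: mat3_def vec_eq_iff forall_3)

lemma mat3_eq_iff:
  "mat3 a1 b1 c1 d1 e1 f1 g1 h1 i1 = mat3 a2 b2 c2 d2 e2 f2 g2 h2 i2 \<longleftrightarrow>
   a1 = a2 \<and> b1 = b2 \<and> c1 = c2 \<and> d1 = d2 \<and> e1 = e2 \<and> f1 = f2 \<and> g1 = g2 \<and> h1 = h2 \<and> i1 = i2"
  by (simp add: mat3_def vec_eq_iff forall_3)

lemma mat_1_eq_mat3: "(mat 1 :: real^3^3) = mat3 1 0 0 0 1 0 0 0 1"
  by (simp add: mat3_def vec_eq_iff forall_3 mat_def)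

lemma matpow_scaleR: "matpow (v *\<^sub>R K) n = (v ^ n) *\<^sub>R matpow K n"
  by (induction n) (simp_all add: matrix_scalar_ac scalar_matrix_assoc[symmetric])

lemma matpow_of_cube_eq_neg:
  fixes K :: "real^'n^'n"
  assumes "K ** (K ** K) = - K"
  shows "matpow K (2*m + 1) = (-1)^m *\<^sub>R K \<and> matpow K (2*m + 2) = (-1)^m *\<^sub>R (K ** K)"
proof (induction m)
  case 0
  then show ?case by simp
next
  case (Suc m)
  then have even: "matpow K (2*m + 2) = (-1)^m *\<^sub>R (K ** K)" by blast
  have odd': "matpow K (2 * Suc m + 1) = (-1) ^ Suc m *\<^sub>R K"
  proof -
    have "matpow K (2 * Suc m + 1) = K ** matpow K (2*m + 2)"
      by (simp flip: matpow.simps)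
    also have "\<dots> = (-1)^m *\<^sub>R (K ** (K ** K))"
      by (simp only: even matrix_scalar_ac scalar_matrix_assoc[symmetric])
    finally show ?thesis using assms by simp
  qed
  have "matpow K (2 * Suc m + 2) = K ** matpow K (2 * Suc m + 1)"
    by (simp flip: matpow.simps)
  also have "\<dots> = (-1) ^ Suc m *\<^sub>R (K ** K)"
    by (simp only: odd' matrix_scalar_ac scalar_matrix_assoc[symmetric])
  finally show ?case using odd' by blast
qed

lemma exp_series_term_of_cube_eq_neg:
  fixes K :: "real^'n^'n"
  assumes "K ** (K ** K) = - K"
  shows "(1 / fact n) *\<^sub>R matpow (v *\<^sub>R K) n =
    (if n = 0 then mat 1 + K ** K else 0)
    + (sin_coeff n * v ^ n) *\<^sub>R K - (cos_coeff n * v ^ n) *\<^sub>R (K ** K)"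
proof -
  have series_term: "(1 / fact n) *\<^sub>R matpow (v *\<^sub>R K) n = (v ^ n / fact n) *\<^sub>R matpow K n"
    by (simp add: matpow_scaleR)
  have "n = 0 \<or> (\<exists>m. n = 2*m + 1) \<or> (\<exists>m. n = 2*m + 2)" by presburger
  then consider "n = 0" | m where "n = 2*m + 1" | m where "n = 2*m + 2" by blast
  then show ?thesis
  proof cases
    case 1
    then show ?thesis by (simp add: cos_coeff_def sin_coeff_def)
  next
    case (2 m)
    then have "sin_coeff n = (-1)^m / fact n" "cos_coeff n = 0" "n \<noteq> 0"
      by (simp_all add: sin_coeff_def cos_coeff_def)
    moreover have "matpow K n = (-1)^m *\<^sub>R K"
      using matpow_of_cube_eq_neg[OF assms, of m] 2 by blast
    ultimately show ?thesis
      by (simp add: series_term scaleR_scaleR)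
  next
    case (3 m)
    then have "cos_coeff n = - ((-1)^m / fact n)" "sin_coeff n = 0" "n \<noteq> 0"
      by (simp_all add: sin_coeff_def cos_coeff_def)
    moreover have "matpow K n = (-1)^m *\<^sub>R (K ** K)"
      using matpow_of_cube_eq_neg[OF assms, of m] 3 by blast
    ultimately show ?thesis
      by (simp add: series_term scaleR_scaleR)
  qed
qed

lemma mexp_of_cube_eq_neg:
  fixes K :: "real^'n^'n"
  assumes "K ** (K ** K) = - K"
  shows "mexp (v *\<^sub>R K) = mat 1 + sin v *\<^sub>R K + (1 - cos v) *\<^sub>R (K ** K)"
proof -
  have "(\<lambda>n. (if n = 0 then mat 1 + K ** K else 0)) sums (mat 1 + K ** K)"
    using sums_single[of 0 "\<lambda>_. mat 1 + K ** K"] by simp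
  moreover have "(\<lambda>n. (sin_coeff n * v ^ n) *\<^sub>R K) sums (sin v *\<^sub>R K)"
    using sums_scaleR_left[OF sin_converges[of v]] by simp
  moreover have "(\<lambda>n. (cos_coeff n * v ^ n) *\<^sub>R (K ** K)) sums (cos v *\<^sub>R (K ** K))"
    using sums_scaleR_left[OF cos_converges[of v]] by simp
  ultimately have "(\<lambda>n. (1 / fact n) *\<^sub>R matpow (v *\<^sub>R K) n) sums
      ((mat 1 + K ** K) + sin v *\<^sub>R K - cos v *\<^sub>R (K ** K))"
    unfolding exp_series_term_of_cube_eq_neg[OF assms] by (intro sums_add sums_diff)
  then show ?thesis
    unfolding mexp_def by (simp add: sums_unique[symmetric] algebra_simps)
qed

definition hat :: "real \<Rightarrow> real \<Rightarrow> real \<Rightarrow> real^3^3"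
  where "hat x y z = mat3 0 (-z) y z 0 (-x) (-y) x 0"

lemma hat_cube: "hat x y z ** (hat x y z ** hat x y z) = - (x\<^sup>2 + y\<^sup>2 + z\<^sup>2) *\<^sub>R hat x y z"
  unfolding hat_def mat3_mult mat3_scaleR mat3_eq_iff by (simp add: algebra_simps power2_eq_square)

lemma mexp_hat_unit:
  assumes "x\<^sup>2 + y\<^sup>2 + z\<^sup>2 = 1"
  shows "mexp (v *\<^sub>R hat x y z) = mat 1 + sin v *\<^sub>R hat x y z + (1 - cos v) *\<^sub>R (hat x y z ** hat x y z)"
  by (rule mexp_of_cube_eq_neg) (simp add: hat_cube assms)

lemma Xm_pi_div_4:
  "Xm a b \<alpha> (pi / 4) = hat (a * (sin \<alpha> / sqrt 2)) (- b * (sin \<alpha> / sqrt 2)) (cos \<alpha>)"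
  by (simp add: Xm_def Fm_def G1m_def G2m_def hat_def mat3_def vec_eq_iff forall_3 sin_45 cos_45
      real_div_sqrt field_simps)

lemma unit_axis_Xm_pi_div_4:
  assumes "a\<^sup>2 = 1" "b\<^sup>2 = 1"
  shows "(a * (sin \<alpha> / sqrt 2))\<^sup>2 + (- b * (sin \<alpha> / sqrt 2))\<^sup>2 + (cos \<alpha>)\<^sup>2 = 1"
  using assms by (simp add: power_mult_distrib power_divide)

lemma sin_sq_sq_plus_double_cos_sq:
  fixes \<alpha> :: real
  shows "((sin \<alpha>)\<^sup>2)\<^sup>2 + (2 * cos \<alpha>)\<^sup>2 = (1 + (cos \<alpha>)\<^sup>2)\<^sup>2"
  using sin_cos_squared_add[of \<alpha>] by algebra

lemma smax_arg_bounds: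
  fixes \<alpha> :: real
  shows "- 1 \<le> - (sin \<alpha>)\<^sup>2 / (1 + (cos \<alpha>)\<^sup>2)" "- (sin \<alpha>)\<^sup>2 / (1 + (cos \<alpha>)\<^sup>2) \<le> 1"
proof -
  have "(sin \<alpha>)\<^sup>2 \<le> 1 + (cos \<alpha>)\<^sup>2" "0 < 1 + (cos \<alpha>)\<^sup>2"
    using sin_squared_eq[of \<alpha>] by (auto intro: add_pos_nonneg)
  then show "- 1 \<le> - (sin \<alpha>)\<^sup>2 / (1 + (cos \<alpha>)\<^sup>2)" "- (sin \<alpha>)\<^sup>2 / (1 + (cos \<alpha>)\<^sup>2) \<le> 1"
    by (auto simp: field_simps)
qed

lemma cos_smax: "cos (smax \<alpha>) = - (sin \<alpha>)\<^sup>2 / (1 + (cos \<alpha>)\<^sup>2)"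
  unfolding smax_def using smax_arg_bounds by simp

lemma sin_smax:
  assumes "0 \<le> cos \<alpha>"
  shows "sin (smax \<alpha>) = 2 * cos \<alpha> / (1 + (cos \<alpha>)\<^sup>2)"
proof -
  have pos: "0 < 1 + (cos \<alpha>)\<^sup>2" by (simp add: add_pos_nonneg)
  have "sin (smax \<alpha>) = sqrt (1 - ((sin \<alpha>)\<^sup>2 / (1 + (cos \<alpha>)\<^sup>2))\<^sup>2)"
    unfolding smax_def using smax_arg_bounds by (simp add: sin_arccos)
  also have "1 - ((sin \<alpha>)\<^sup>2 / (1 + (cos \<alpha>)\<^sup>2))\<^sup>2 = (2 * cos \<alpha> / (1 + (cos \<alpha>)\<^sup>2))\<^sup>2"
    using sin_sq_sq_plus_double_cos_sq[of \<alpha>] pos by (simp add: power_divide field_simps)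
  finally show ?thesis
    using assms pos by simp
qed

lemma vdur_0: "vdur \<alpha> 0 = smax \<alpha>"
proof -
  have c4: "cos (4 * \<alpha>) = 2 * (cos (2 * \<alpha>))\<^sup>2 - 1"
    using cos_double_cos[of "2 * \<alpha>"] by simp
  have den: "5 + 2 * cos (2 * \<alpha>) + cos (4 * \<alpha>) + 2 * (sin (2 * \<alpha>))\<^sup>2
      = 4 * (1 + (cos \<alpha>)\<^sup>2)"
    unfolding c4 cos_double sin_double using sin_cos_squared_add[of \<alpha>] by algebra
  have num: "- (sin (2 * \<alpha>))\<^sup>2 - 4 * sin \<alpha> ^ 4 = 4 * - (sin \<alpha>)\<^sup>2"
    unfolding sin_double using sin_cos_squared_add[of \<alpha>] by algebra
  have "vdur \<alpha> 0 = arccos ((- (sin (2 * \<alpha>))\<^sup>2 - 4 * sin \<alpha> ^ 4) / (4 * (1 + (cos \<alpha>)\<^sup>2)))"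
    unfolding vdur_def Let_def by (simp add: den)
  also have "\<dots> = smax \<alpha>"
    unfolding num smax_def by (subst nonzero_mult_divide_mult_cancel_left) simp_all
  finally show ?thesis .
qed

lemma vdur_smax:
  assumes "0 \<le> cos \<alpha>" "3 * (cos \<alpha>)\<^sup>2 \<noteq> 1"
  shows "vdur \<alpha> (smax \<alpha>) = smax \<alpha>"
proof -
  define c s where "c = cos \<alpha>" and "s = sin \<alpha>"
  define q where "q = 1 / (1 + c\<^sup>2)"
  define w where "w = - s\<^sup>2 * q"
  have hq: "(1 + c\<^sup>2) * q = 1"
    unfolding q_def using add_pos_nonneg[of 1 "c\<^sup>2"] by simp
  have pyth: "s\<^sup>2 + c\<^sup>2 = 1"
    unfolding s_def c_def by simp
  have cos_sm: "cos (smax \<alpha>) = w" and sin_sm: "sin (smax \<alpha>) = 2 * c * q"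
    using cos_smax[of \<alpha>] sin_smax[OF assms(1)] unfolding w_def q_def c_def s_def by simp_all
  have cos_2sm: "cos (2 * smax \<alpha>) = 2 * w\<^sup>2 - 1"
    using cos_double_cos[of "smax \<alpha>"] cos_sm by simp
  have c4: "cos (4 * \<alpha>) = 2 * (cos (2 * \<alpha>))\<^sup>2 - 1"
    using cos_double_cos[of "2 * \<alpha>"] by simp
  have s2: "sin (2 * \<alpha>) = 2 * s * c" and c2: "cos (2 * \<alpha>) = c\<^sup>2 - s\<^sup>2"
    unfolding s_def c_def by (simp_all add: sin_double cos_double)
  define E where "E = 5 + 2 * cos (2 * \<alpha>) + cos (4 * \<alpha>)
    - 8 * cos \<alpha> * (sin \<alpha>)\<^sup>2 * sin (smax \<alpha>) + 2 * (sin (2 * \<alpha>))\<^sup>2 * cos (smax \<alpha>)"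
  define N where "N = (sin (2 * \<alpha>))\<^sup>2 - 8 * cos \<alpha> * (sin \<alpha>)\<^sup>2 * sin (smax \<alpha>)
    - 2 * (sin (2 * \<alpha>))\<^sup>2 * cos (smax \<alpha>) - 4 * sin \<alpha> ^ 4 * cos (2 * smax \<alpha>)"
  have E: "E = 4 * (3 * c\<^sup>2 - 1)\<^sup>2 * q"
    unfolding E_def c4 c2 s2 sin_sm cos_sm w_def c_def[symmetric] s_def[symmetric]
    using hq pyth by algebra
  have N: "N = w * E"
    unfolding E N_def cos_2sm c4 c2 s2 sin_sm cos_sm w_def c_def[symmetric] s_def[symmetric]
    using hq pyth by algebra
  have "E \<noteq> 0"
    unfolding E using hq assms(2) by (auto simp: c_def)
  then have "N / E = w" by (simp add: N)
  moreover have "vdur \<alpha> (smax \<alpha>) = arccos (N / E)"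
    unfolding vdur_def Let_def N_def E_def by simp
  ultimately show ?thesis
    unfolding smax_def w_def q_def c_def s_def by simp
qed

text \<open>\<open>(1 + c\<^sup>2) e\<^sup>v\<^sup>X\<close> for \<open>X = X\<^sub>a\<^sub>b\<close> with \<open>c = cos \<alpha>\<close>, \<open>t = sin \<alpha> / \<surd>2\<close>, when
  \<open>sin v = 2c / (1 + c\<^sup>2)\<close> and \<open>1 - cos v = 2 / (1 + c\<^sup>2)\<close>, i.e. when \<open>v = s\<^sub>m\<^sub>a\<^sub>x\<close>.\<close>

definition rodrigues_numerator :: "real \<Rightarrow> real \<Rightarrow> real \<Rightarrow> real \<Rightarrow> real^3^3"
  where "rodrigues_numerator a b c t =
    (let H = hat (a * t) (- b * t) c in (1 + c\<^sup>2) *\<^sub>R mat 1 + (2 * c) *\<^sub>R H + 2 *\<^sub>R (H ** H))"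

lemma mexp_smax_Xm_pi_div_4:
  assumes "0 \<le> cos \<alpha>" "a\<^sup>2 = 1" "b\<^sup>2 = 1"
  shows "mexp (smax \<alpha> *\<^sub>R Xm a b \<alpha> (pi / 4)) =
    (1 / (1 + (cos \<alpha>)\<^sup>2)) *\<^sub>R rodrigues_numerator a b (cos \<alpha>) (sin \<alpha> / sqrt 2)"
proof -
  have pos: "0 < 1 + (cos \<alpha>)\<^sup>2" by (simp add: add_pos_nonneg)
  define H where "H = hat (a * (sin \<alpha> / sqrt 2)) (- b * (sin \<alpha> / sqrt 2)) (cos \<alpha>)"
  have "1 - cos (smax \<alpha>) = 2 / (1 + (cos \<alpha>)\<^sup>2)"
    using sin_cos_squared_add[of \<alpha>] pos by (simp add: cos_smax field_simps)
  moreover have "mexp (smax \<alpha> *\<^sub>R Xm a b \<alpha> (pi / 4)) =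
      mat 1 + sin (smax \<alpha>) *\<^sub>R H + (1 - cos (smax \<alpha>)) *\<^sub>R (H ** H)"
    unfolding Xm_pi_div_4 H_def by (rule mexp_hat_unit[OF unit_axis_Xm_pi_div_4[OF assms(2,3)]])
  ultimately show ?thesis
    unfolding rodrigues_numerator_def Let_def H_def[symmetric]
    using pos by (simp add: sin_smax[OF assms(1)] scaleR_add_right)
qed

lemma rodrigues_numerator_product:
  assumes "c\<^sup>2 + 2 * t\<^sup>2 = 1" "D = 1 + c\<^sup>2" "C = 3 * c\<^sup>2 - 1" "S = - 4 * t * c"
  shows "rodrigues_numerator 1 1 c t ** rodrigues_numerator (-1) 1 c t
      ** rodrigues_numerator (-1) (-1) c t ** rodrigues_numerator 1 (-1) c t =
    mat3 (D^4) 0 0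
         0 (D^4 - 8 * S\<^sup>2 * C\<^sup>2) (4 * S * C * (C\<^sup>2 - S\<^sup>2))
         0 (- 4 * S * C * (C\<^sup>2 - S\<^sup>2)) (D^4 - 8 * S\<^sup>2 * C\<^sup>2)"
  unfolding rodrigues_numerator_def hat_def Let_def mat_1_eq_mat3 mat3_mult mat3_add mat3_scaleR
    mat3_eq_iff assms(2-4)
  by (intro conjI; simp add: algebra_simps; use assms(1) in algebra)

lemma Rx_quadruple_angle:
  assumes "sin \<theta> = S / D" "cos \<theta> = C / D" "D \<noteq> 0"
  shows "Rx (4 * \<theta>) = (1 / D^4) *\<^sub>R
     mat3 (D^4) 0 0
          0 (D^4 - 8 * S\<^sup>2 * C\<^sup>2) (4 * S * C * (C\<^sup>2 - S\<^sup>2))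
          0 (- 4 * S * C * (C\<^sup>2 - S\<^sup>2)) (D^4 - 8 * S\<^sup>2 * C\<^sup>2)"
proof -
  have "cos (4 * \<theta>) = 1 - 8 * (sin \<theta>)\<^sup>2 * (cos \<theta>)\<^sup>2"
    using cos_double_sin[of "2 * \<theta>"] sin_double[of \<theta>] by (simp add: power_mult_distrib)
  then have cos4: "cos (4 * \<theta>) = (D^4 - 8 * S\<^sup>2 * C\<^sup>2) / D^4"
    using assms by (simp add: field_simps power2_eq_square power4_eq_xxxx)
  have "sin (4 * \<theta>) = 4 * sin \<theta> * cos \<theta> * ((cos \<theta>)\<^sup>2 - (sin \<theta>)\<^sup>2)"
    using sin_double[of "2 * \<theta>"] sin_double[of \<theta>] cos_double[of \<theta>] by simp
  then have sin4: "sin (4 * \<theta>) = (4 * S * C * (C\<^sup>2 - S\<^sup>2)) / D^4"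
    using assms by (simp add: field_simps power2_eq_square power4_eq_xxxx)
  show ?thesis
    unfolding Rx_def mat3_scaleR cos4 sin4 using assms(3) by (simp add: mat3_def)
qed

lemma cos_sq_gt_half:
  assumes "0 < \<alpha>" "\<alpha> < pi / 4"
  shows "1 / 2 < (cos \<alpha>)\<^sup>2"
proof -
  have "sqrt 2 / 2 < cos \<alpha>"
    using cos_monotone_0_pi[of \<alpha> "pi / 4"] assms by (simp add: cos_45)
  then have "(sqrt 2 / 2)\<^sup>2 < (cos \<alpha>)\<^sup>2"
    by (intro power_strict_mono) auto
  then show ?thesis by (simp add: power_divide)
qed

lemma minus_four_mult_div_sqrt_two: "- 4 * (y / sqrt 2) = - 2 * sqrt 2 * y"
  by (simp add: field_simps)

lemma sin_cos_theta:
  assumes "0 < \<alpha>" "\<alpha> < pi / 4"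
  shows "sin (theta \<alpha>) = - 4 * (sin \<alpha> / sqrt 2) * cos \<alpha> / (1 + (cos \<alpha>)\<^sup>2)"
    and "cos (theta \<alpha>) = (3 * (cos \<alpha>)\<^sup>2 - 1) / (1 + (cos \<alpha>)\<^sup>2)"
proof -
  define c t where "c = cos \<alpha>" and "t = sin \<alpha> / sqrt 2"
  define x where "x = - 4 * t * c / (1 + c\<^sup>2)"
  have pos: "0 < 1 + c\<^sup>2" by (simp add: add_pos_nonneg)
  have "c\<^sup>2 + 2 * t\<^sup>2 = 1"
    unfolding c_def t_def by (simp add: power_divide)
  then have "(- 4 * t * c)\<^sup>2 + (3 * c\<^sup>2 - 1)\<^sup>2 = (1 + c\<^sup>2)\<^sup>2" by algebra
  then have unit: "x\<^sup>2 + ((3 * c\<^sup>2 - 1) / (1 + c\<^sup>2))\<^sup>2 = 1"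
    unfolding x_def using pos by (simp add: power_divide field_simps)
  then have "x\<^sup>2 \<le> 1"
    using zero_le_power2[of "(3 * c\<^sup>2 - 1) / (1 + c\<^sup>2)"] by linarith
  then have x_bounds: "- 1 \<le> x" "x \<le> 1"
    using abs_square_le_1[of x] by linarith+
  have theta: "theta \<alpha> = arcsin x"
    unfolding theta_def x_def t_def c_def minus_four_mult_div_sqrt_two by simp
  show "sin (theta \<alpha>) = - 4 * (sin \<alpha> / sqrt 2) * cos \<alpha> / (1 + (cos \<alpha>)\<^sup>2)"
    unfolding theta using x_bounds by (simp add: x_def t_def c_def)
  have "cos (theta \<alpha>) = sqrt (1 - x\<^sup>2)"
    unfolding theta using x_bounds by (simp add: cos_arcsin)
  also have "1 - x\<^sup>2 = ((3 * c\<^sup>2 - 1) / (1 + c\<^sup>2))\<^sup>2"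
    using unit by linarith
  also have "sqrt (((3 * c\<^sup>2 - 1) / (1 + c\<^sup>2))\<^sup>2) = (3 * c\<^sup>2 - 1) / (1 + c\<^sup>2)"
    using cos_sq_gt_half[OF assms] pos unfolding c_def by simp
  finally show "cos (theta \<alpha>) = (3 * (cos \<alpha>)\<^sup>2 - 1) / (1 + (cos \<alpha>)\<^sup>2)"
    unfolding c_def .
qed

lemma Mbar_eq_Rx_if_vdur_eq_smax:
  assumes "0 < \<alpha>" "\<alpha> < pi / 4" and vdur: "vdur \<alpha> s = smax \<alpha>"
  shows "Mbar s \<alpha> = Rx (4 * theta \<alpha>)"
proof -
  define c t where "c = cos \<alpha>" and "t = sin \<alpha> / sqrt 2"
  define D C S where "D = 1 + c\<^sup>2" and "C = 3 * c\<^sup>2 - 1" and "S = - 4 * t * c"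
  have D_pos: "0 < D"
    unfolding D_def by (simp add: add_pos_nonneg)
  have "0 \<le> cos \<alpha>"
    using assms by (intro cos_ge_zero) auto
  then have exp: "mexp (vdur \<alpha> s *\<^sub>R Xm a b \<alpha> (pi / 4)) = (1 / D) *\<^sub>R rodrigues_numerator a b c t"
    if "a\<^sup>2 = 1" "b\<^sup>2 = 1" for a b
    unfolding vdur c_def t_def D_def using that by (rule mexp_smax_Xm_pi_div_4)
  have "c\<^sup>2 + 2 * t\<^sup>2 = 1"
    unfolding c_def t_def by (simp add: power_divide)
  have "Mbar s \<alpha> = (1 / D)^4 *\<^sub>R (rodrigues_numerator 1 1 c t ** rodrigues_numerator (-1) 1 c t
      ** rodrigues_numerator (-1) (-1) c t ** rodrigues_numerator 1 (-1) c t)"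
    unfolding Mbar_def Let_def
    by (simp add: exp matrix_scalar_ac scalar_matrix_assoc[symmetric] power4_eq_xxxx)
  also have "\<dots> = (1 / D^4) *\<^sub>R
      mat3 (D^4) 0 0
           0 (D^4 - 8 * S\<^sup>2 * C\<^sup>2) (4 * S * C * (C\<^sup>2 - S\<^sup>2))
           0 (- 4 * S * C * (C\<^sup>2 - S\<^sup>2)) (D^4 - 8 * S\<^sup>2 * C\<^sup>2)"
    using \<open>c\<^sup>2 + 2 * t\<^sup>2 = 1\<close> D_def C_def S_def
    by (simp add: rodrigues_numerator_product power_one_over)
  also have "\<dots> = Rx (4 * theta \<alpha>)"
    using sin_cos_theta[OF assms(1,2)] D_pos
    unfolding c_def t_def D_def C_def S_def by (intro Rx_quadruple_angle[symmetric]) auto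
  finally show ?thesis .
qed

theorem corollary6:
  fixes \<alpha> :: real
  assumes "0 < \<alpha>" and "\<alpha> < pi / 4"
  shows "Mbar 0 \<alpha> = Rx (4 * theta \<alpha>) \<and> Mbar (smax \<alpha>) \<alpha> = Rx (4 * theta \<alpha>)"
proof -
  have "0 \<le> cos \<alpha>"
    using assms by (intro cos_ge_zero) auto
  moreover have "3 * (cos \<alpha>)\<^sup>2 \<noteq> 1"
    using cos_sq_gt_half[OF assms] by simp
  ultimately have "vdur \<alpha> (smax \<alpha>) = smax \<alpha>"
    by (rule vdur_smax)
  then show ?thesis
    using Mbar_eq_Rx_if_vdur_eq_smax[OF assms] vdur_0 by blast
qed

end
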